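(* Let $K$ be a commutative ring of characteristic $0$ with unit, let $M$ be a multiplicative $\mathbb{R}$-vector subspace of $\mathcal{H}^{>0}$, let $G=\sum_{\alpha}a_\alpha X^\alpha$ be a generalized power series over $K$ in $X=(X_0,\dots,X_k)$, let $m_0,\dots,m_k\in M$ be small, and let $n\in M$. Then the set $$S_n^G:=\{\alpha\in\operatorname{supp}(G):\ m^\alpha=n\}$$ is finite, where $m^\alpha:=m_0^{\alpha_0}\cdots m_k^{\alpha_k}$.
   Context: $\mathcal{H}$ denotes the Hardy field of germs at $+\infty$ of unary functions definable in the o-minimal structure $\mathbb{R}_{\mathrm{an},\exp}$, ordered by $f<g$ iff $f(x)<g(x)$ for all sufficiently large $x$; $\mathcal{H}^{>0}=\{h\in\mathcal{H}:h>0\}$. A multiplicative $\mathbb{R}$-vector subspace of $\mathcal{H}^{>0}$ is a subgroup closed under real powers. A germ $h$ is small if $\lim_{x\to+\infty}h(x)=0$. A generalized power series over $K$ is a formal series $G=\sum_{\alpha\in[0,\infty)^{k+1}}a_\alpha X^\alpha$ with $a_\alpha\in K$ whose support $\operatorname{supp}(G)=\{\alpha:a_\alpha\neq0\}$ is contained in a cartesian product of well-ordered subsets of $\mathbb{R}$. *)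

theory Defs
  imports "HOL-Analysis.Analysis"
begin

text \<open>Points of R^n are represented as real lists of length n.\<close>

definition monomial_list :: "nat list \<Rightarrow> real list \<Rightarrow> real" where
  "monomial_list e xs = (\<Prod>i<length xs. (xs ! i) ^ (e ! i))"

definition analytic_near_box :: "nat \<Rightarrow> (real list \<Rightarrow> real) \<Rightarrow> bool" where
  "analytic_near_box n f \<longleftrightarrow>
     (\<exists>(c :: nat list \<Rightarrow> real) (r :: real). r > 1 \<and>
        (\<forall>xs. length xs = n \<longrightarrow> (\<forall>i<n. \<bar>xs ! i\<bar> < r) \<longrightarrow>
           ((\<lambda>e. \<bar>c e * monomial_list e xs\<bar>) summable_on {e. length e = n}) \<and>
           ((\<lambda>e. c e * monomial_list e xs) has_sum f xs) {e. length e = n}))"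

definition restrict_box :: "nat \<Rightarrow> (real list \<Rightarrow> real) \<Rightarrow> real list \<Rightarrow> real" where
  "restrict_box n f xs = (if (\<forall>i<n. \<bar>xs ! i\<bar> \<le> 1) then f xs else 0)"

text \<open>Definable sets of R_an,exp (with parameters): the smallest family containing the
  basic relations (equality, order, graphs of +, *, exp, restricted analytic functions,
  singletons of reals) and closed under boolean operations, cartesian products,
  permutations of coordinates and projections.\<close>
inductive anexp_definable :: "nat \<Rightarrow> real list set \<Rightarrow> bool" where
  const: "anexp_definable 1 {[c]}"
| eq: "anexp_definable 2 {[x, y] | x y. x = y}"
| less: "anexp_definable 2 {[x, y] | x y. x < y}"
| add: "anexp_definable 3 {[x, y, z] | x y z. z = x + y}"
| mult: "anexp_definable 3 {[x, y, z] | x y z. z = x * y}"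
| exp: "anexp_definable 2 {[x, y] | x y. y = exp x}"
| an: "analytic_near_box n f \<Longrightarrow>
       anexp_definable (Suc n) {xs @ [restrict_box n f xs] | xs. length xs = n}"
| univ: "anexp_definable n {xs. length xs = n}"
| compl: "anexp_definable n A \<Longrightarrow> anexp_definable n ({xs. length xs = n} - A)"
| inter: "anexp_definable n A \<Longrightarrow> anexp_definable n B \<Longrightarrow> anexp_definable n (A \<inter> B)"
| prod: "anexp_definable n A \<Longrightarrow> anexp_definable m B \<Longrightarrow>
         anexp_definable (n + m) {xs @ ys | xs ys. xs \<in> A \<and> ys \<in> B}"
| perm: "anexp_definable n A \<Longrightarrow> p permutes {..<n} \<Longrightarrow>
         anexp_definable n {xs. length xs = n \<and> map (\<lambda>i. xs ! p i) [0..<n] \<in> A}"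
| proj: "anexp_definable (Suc n) A \<Longrightarrow> anexp_definable n {xs. \<exists>y. xs @ [y] \<in> A}"

section \<open>The Hardy field H (germs at +\<infinity> represented by functions)\<close>

definition germ_eq :: "(real \<Rightarrow> real) \<Rightarrow> (real \<Rightarrow> real) \<Rightarrow> bool" where
  "germ_eq f g \<longleftrightarrow> (\<forall>\<^sub>F x in at_top. f x = g x)"

definition in_H :: "(real \<Rightarrow> real) \<Rightarrow> bool" where
  "in_H f \<longleftrightarrow> (\<exists>g. anexp_definable 2 {[x, g x] | x. True} \<and> germ_eq f g)"

definition in_H_pos :: "(real \<Rightarrow> real) \<Rightarrow> bool" where
  "in_H_pos f \<longleftrightarrow> in_H f \<and> (\<forall>\<^sub>F x in at_top. f x > 0)"

definition small_germ :: "(real \<Rightarrow> real) \<Rightarrow> bool" where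
  "small_germ f \<longleftrightarrow> (f \<longlongrightarrow> 0) at_top"

text \<open>A multiplicative R-vector subspace of H^{>0}, as a set of representatives
  (membership, products and powers are taken up to germ equality).\<close>
definition mult_R_subspace :: "(real \<Rightarrow> real) set \<Rightarrow> bool" where
  "mult_R_subspace M \<longleftrightarrow>
     (\<forall>f\<in>M. in_H_pos f) \<and>
     (\<forall>f g. germ_eq f g \<longrightarrow> f \<in> M \<longrightarrow> in_H_pos g \<longrightarrow> g \<in> M) \<and>
     (\<exists>u\<in>M. germ_eq u (\<lambda>_. 1)) \<and>
     (\<forall>f\<in>M. \<forall>g\<in>M. \<exists>h\<in>M. germ_eq h (\<lambda>x. f x * g x)) \<and>
     (\<forall>f\<in>M. \<forall>r::real. \<exists>h\<in>M. germ_eq h (\<lambda>x. f x powr r))"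

definition well_ordered_real :: "real set \<Rightarrow> bool" where
  "well_ordered_real W \<longleftrightarrow> (\<forall>S\<subseteq>W. S \<noteq> {} \<longrightarrow> (\<exists>x\<in>S. \<forall>y\<in>S. x \<le> y))"

definition gps_supp :: "(real ^ 'n \<Rightarrow> 'a::zero) \<Rightarrow> (real ^ 'n) set" where
  "gps_supp a = {\<alpha>. a \<alpha> \<noteq> 0}"

definition is_gen_power_series :: "(real ^ 'n \<Rightarrow> 'a::zero) \<Rightarrow> bool" where
  "is_gen_power_series a \<longleftrightarrow>
     gps_supp a \<subseteq> {\<alpha>. \<forall>i. \<alpha> $ i \<ge> 0} \<and>
     (\<exists>W :: 'n \<Rightarrow> real set. (\<forall>i. well_ordered_real (W i)) \<and>
        gps_supp a \<subseteq> {\<alpha>. \<forall>i. \<alpha> $ i \<in> W i})"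

definition germ_monomial :: "('n::finite \<Rightarrow> real \<Rightarrow> real) \<Rightarrow> real ^ 'n \<Rightarrow> real \<Rightarrow> real" where
  "germ_monomial m \<alpha> = (\<lambda>x. \<Prod>i\<in>UNIV. m i x powr (\<alpha> $ i))"

end

theory Submission
  imports Defs
begin

text \<open>First, a Dickson-type argument: an infinite subset of a finite product
  of well-ordered sets of reals contains distinct exponents \<open>\<alpha> \<le> \<beta>\<close> (componentwise), since
  every sequence in such a product has a componentwise increasing subsequence. Second, for
  small positive \<open>m\<^sub>i\<close> and such \<open>\<alpha>, \<beta>\<close> we have \<open>m^\<beta> = m^\<alpha> m^(\<beta> - \<alpha>)\<close> where
  \<open>m^(\<beta> - \<alpha>) \<rightarrow> 0\<close>, so \<open>m^\<alpha>\<close> and \<open>m^\<beta>\<close> are different germs and cannot both equal \<open>n\<close>.\<close>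

lemma well_ordered_real_incseq_subseq:
  fixes s :: "nat \<Rightarrow> real"
  assumes W: "well_ordered_real W" and s: "\<And>j. s j \<in> W"
  shows "\<exists>r. strict_mono r \<and> incseq (\<lambda>j. s (r j))"
proof -
  obtain g where g: "strict_mono g" "monoseq (\<lambda>j. s (g j))" using seq_monosub[of s] by blast
  show ?thesis
  proof (cases "incseq (\<lambda>j. s (g j))")
    case True
    then show ?thesis using g by blast
  next
    case False
    then have dec: "decseq (\<lambda>j. s (g j))" using g(2) unfolding monoseq_iff by blast
    have "range (\<lambda>j. s (g j)) \<subseteq> W" using s by auto
    from W[unfolded well_ordered_real_def, rule_format, OF this]
    obtain k where k: "\<forall>j. s (g k) \<le> s (g j)" by auto
    \<comment> \<open>a decreasing sequence attaining its minimum is constant from then on\<close>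
    have const: "s (g (j + k)) = s (g k)" for j
      using k dec unfolding decseq_def by (metis le_add2 order_antisym)
    have "strict_mono (\<lambda>j. g (j + k))" using g(1) unfolding strict_mono_def by simp
    moreover have "incseq (\<lambda>j. s (g (j + k)))" using const unfolding incseq_def by simp
    ultimately show ?thesis by blast
  qed
qed

lemma well_ordered_real_componentwise_incseq_subseq:
  fixes f :: "nat \<Rightarrow> real ^ 'n"
  assumes W: "\<And>i. well_ordered_real (W i)" and f: "\<And>j i. f j $ i \<in> W i"
    and "finite I"
  shows "\<exists>r. strict_mono r \<and> (\<forall>i\<in>I. incseq (\<lambda>j. f (r j) $ i))"
  using \<open>finite I\<close>
proof (induction I rule: finite_induct)
  case empty
  have "strict_mono (\<lambda>j::nat. j)" by (simp add: strict_mono_def)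
  then show ?case by blast
next
  case (insert i I)
  then obtain r where r: "strict_mono r" "\<forall>i\<in>I. incseq (\<lambda>j. f (r j) $ i)" by blast
  obtain r' where r': "strict_mono r'" "incseq (\<lambda>j. f (r (r' j)) $ i)"
    using well_ordered_real_incseq_subseq[OF W, of "\<lambda>j. f (r j) $ i"] f by blast
  have "strict_mono (r \<circ> r')" using r(1) r'(1) by (simp add: strict_mono_def)
  moreover have "incseq (\<lambda>j. f (r (r' j)) $ i')" if "i' \<in> I" for i'
    using r(2) that strict_mono_mono[OF r'(1)] unfolding incseq_def mono_def by simp
  ultimately show ?case using r'(2) by auto
qed

lemma infinite_well_ordered_product_obtains_le_pair:
  fixes S :: "(real ^ 'n) set"
  assumes W: "\<And>i. well_ordered_real (W i)" and S: "S \<subseteq> {\<alpha>. \<forall>i. \<alpha> $ i \<in> W i}"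
    and "infinite S"
  obtains \<alpha> \<beta> where "\<alpha> \<in> S" "\<beta> \<in> S" "\<alpha> \<noteq> \<beta>" "\<And>i. \<alpha> $ i \<le> \<beta> $ i"
proof -
  obtain f :: "nat \<Rightarrow> real ^ 'n" where f: "inj f" "range f \<subseteq> S"
    using infinite_countable_subset[OF \<open>infinite S\<close>] by blast
  have fW: "f j $ i \<in> W i" for j i using f(2) S by blast
  obtain r where r: "strict_mono r" "\<forall>i\<in>UNIV. incseq (\<lambda>j. f (r j) $ i)"
    using well_ordered_real_componentwise_incseq_subseq[of W f UNIV, OF W fW finite_class.finite_UNIV] by blast
  have "f (r 0) \<noteq> f (r 1)"
    using inj_eq[OF f(1)] strict_mono_eq[OF r(1)] by simp
  moreover have "f (r 0) $ i \<le> f (r 1) $ i" for i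
    using r(2) unfolding incseq_def by simp
  moreover have "f (r 0) \<in> S" "f (r 1) \<in> S" using f(2) by auto
  ultimately show thesis using that by blast
qed

lemma germ_monomial_add: "germ_monomial m (\<alpha> + \<gamma>) x = germ_monomial m \<alpha> x * germ_monomial m \<gamma> x"
  unfolding germ_monomial_def by (simp add: powr_add prod.distrib)

lemma germ_monomial_pos:
  assumes "\<And>i. m i x > 0"
  shows "germ_monomial m \<alpha> x > 0"
  unfolding germ_monomial_def using assms by (intro prod_pos) (metis less_irrefl powr_gt_zero)

lemma germ_monomial_tendsto_zero:
  assumes small: "\<And>i. (m i \<longlongrightarrow> 0) at_top" and pos: "\<And>i. \<forall>\<^sub>F x in at_top. m i x > 0"
    and nonneg: "\<And>i. \<gamma> $ i \<ge> 0" and "\<gamma> \<noteq> 0"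
  shows "(germ_monomial m \<gamma> \<longlongrightarrow> 0) at_top"
proof -
  define L where "L i = (if \<gamma> $ i = 0 then 1 else 0 :: real)" for i
  have "((\<lambda>x. m i x powr (\<gamma> $ i)) \<longlongrightarrow> L i) at_top" for i
  proof (cases "\<gamma> $ i = 0")
    case True
    have "\<forall>\<^sub>F x in at_top. m i x powr (\<gamma> $ i) = 1"
      using pos[of i] by eventually_elim (simp add: True)
    then show ?thesis by (simp add: L_def True tendsto_eventually)
  next
    case False
    have "\<forall>\<^sub>F x in at_top. 0 \<le> m i x" using pos[of i] by eventually_elim simp
    moreover have "\<gamma> $ i > 0" using nonneg[of i] False by simp
    ultimately show ?thesis
      unfolding L_def using False by (simp add: tendsto_zero_powrI[OF small tendsto_const])
  qed
  then have "(germ_monomial m \<gamma> \<longlongrightarrow> prod L UNIV) at_top"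
    unfolding germ_monomial_def by (rule tendsto_prod)
  moreover obtain i where "\<gamma> $ i \<noteq> 0" using \<open>\<gamma> \<noteq> 0\<close> by (metis vec_eq_iff zero_index)
  then have "prod L UNIV = 0" by (auto simp: L_def)
  ultimately show ?thesis by simp
qed

lemma germ_monomial_le_not_germ_eq:
  assumes small: "\<And>i. (m i \<longlongrightarrow> 0) at_top" and pos: "\<And>i. \<forall>\<^sub>F x in at_top. m i x > 0"
    and le: "\<And>i. \<alpha> $ i \<le> \<beta> $ i" and "\<alpha> \<noteq> \<beta>"
  shows "\<not> germ_eq (germ_monomial m \<alpha>) (germ_monomial m \<beta>)"
proof
  assume "germ_eq (germ_monomial m \<alpha>) (germ_monomial m \<beta>)"
  moreover have "\<forall>\<^sub>F x in at_top. \<forall>i. m i x > 0" using pos by (rule eventually_all_finite)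
  ultimately have "\<forall>\<^sub>F x in at_top. germ_monomial m (\<beta> - \<alpha>) x = 1"
    unfolding germ_eq_def
  proof eventually_elim
    case (elim x)
    have "germ_monomial m \<beta> x = germ_monomial m \<alpha> x * germ_monomial m (\<beta> - \<alpha>) x"
      by (metis germ_monomial_add add.commute diff_add_cancel)
    then show ?case using elim germ_monomial_pos[of m x \<alpha>] by simp
  qed
  then have "(germ_monomial m (\<beta> - \<alpha>) \<longlongrightarrow> 1) at_top" by (rule tendsto_eventually)
  moreover have "(germ_monomial m (\<beta> - \<alpha>) \<longlongrightarrow> 0) at_top"
    using \<open>\<alpha> \<noteq> \<beta>\<close> le by (intro germ_monomial_tendsto_zero small pos) auto
  ultimately have "(1::real) = 0" by (rule tendsto_unique[OF trivial_limit_at_top_linorder])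
  then show False by simp
qed

theorem lemma5p1:
  fixes a :: "real ^ 'n \<Rightarrow> 'a :: {comm_ring_1, ring_char_0}"
    and M :: "(real \<Rightarrow> real) set"
    and m :: "'n \<Rightarrow> real \<Rightarrow> real"
    and n :: "real \<Rightarrow> real"
  assumes "mult_R_subspace M"
    and "is_gen_power_series a"
    and "\<And>i. m i \<in> M"
    and "\<And>i. small_germ (m i)"
    and "n \<in> M"
  shows "finite {\<alpha> \<in> gps_supp a. germ_eq (germ_monomial m \<alpha>) n}"
proof (rule ccontr)
  let ?S = "{\<alpha> \<in> gps_supp a. germ_eq (germ_monomial m \<alpha>) n}"
  assume "infinite ?S"
  obtain W where W: "\<And>i. well_ordered_real (W i)" "gps_supp a \<subseteq> {\<alpha>. \<forall>i. \<alpha> $ i \<in> W i}"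
    using assms(2) unfolding is_gen_power_series_def by blast
  have S_sub: "?S \<subseteq> {\<alpha>. \<forall>i. \<alpha> $ i \<in> W i}" using W(2) by blast
  obtain \<alpha> \<beta> where \<alpha>\<beta>: "\<alpha> \<in> ?S" "\<beta> \<in> ?S" "\<alpha> \<noteq> \<beta>" "\<And>i. \<alpha> $ i \<le> \<beta> $ i"
    by (rule infinite_well_ordered_product_obtains_le_pair[of W ?S, OF W(1) S_sub \<open>infinite ?S\<close>]) blast
  have small: "(m i \<longlongrightarrow> 0) at_top" for i
    using assms(4) unfolding small_germ_def .
  have pos: "\<forall>\<^sub>F x in at_top. m i x > 0" for i
  proof -
    have "in_H_pos (m i)" using assms(1,3) unfolding mult_R_subspace_def by blast
    then show ?thesis unfolding in_H_pos_def by blast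
  qed
  have "\<forall>\<^sub>F x in at_top. germ_monomial m \<alpha> x = n x" "\<forall>\<^sub>F x in at_top. germ_monomial m \<beta> x = n x"
    using \<alpha>\<beta>(1,2) unfolding germ_eq_def by simp_all
  then have "germ_eq (germ_monomial m \<alpha>) (germ_monomial m \<beta>)"
    unfolding germ_eq_def by eventually_elim simp
  with germ_monomial_le_not_germ_eq[OF small pos \<alpha>\<beta>(4) \<alpha>\<beta>(3)] show False by contradiction
qed

end
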